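(* Fix integers $L\ge 1$ and $n_0,\dots,n_L\ge 1$, and let $\boldsymbol{\mathcal W}=\mathbb{R}^{n_0\times n_1}\times\cdots\times\mathbb{R}^{n_{L-1}\times n_L}$, which has dimension $N=\sum_{l=1}^L n_{l-1}n_l$. For $\mathbf W=(W_1,\dots,W_L)\in\boldsymbol{\mathcal W}$ let $F(\mathbf W,\cdot)\colon\mathbb{R}^{n_0}\to\mathbb{R}^{n_L}$ be the network map $F(\mathbf W,\cdot)=\Lambda_L(W_L,\cdot)\circ\cdots\circ\Lambda_1(W_1,\cdot)$, where $\Lambda_l(W_l,x)=\sigma_l(W_l^\top x+b_l)$ with fixed biases $b_l\in\mathbb{R}^{n_l}$, each $\sigma_l$ applies a smooth, monotonically increasing, Lipschitz scalar function entrywise for $l<L$, and $\sigma_L=\mathrm{id}$. Let $f^*\colon\boldsymbol{\mathcal X}\to\boldsymbol{\mathcal Y}$ be a map (the task map), let $x_1,\dots,x_T\in\boldsymbol{\mathcal X}$ and $y_i=f^*(x_i)$. Let $E\colon\boldsymbol{\mathcal Y}\times\boldsymbol{\mathcal Y}\to\mathbb{R}$ be an error function such that for every $y\in\boldsymbol{\mathcal Y}$, $E(\cdot,y)$ is differentiable, $E$ has global minima, and $\phi=y$ is a global minimum of $E(\cdot,y)$ if and only if the gradient $\nabla_E(\phi)$ of $E(\cdot,y)$ vanishes at $\phi=y$. Define the empirical loss $\mathcal J(\mathbf W)=\frac1T\sum_{i=1}^T E(F(\mathbf W,x_i),y_i)$ and the matrix $\mathbf P(\mathbf W)=[\mathrm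 D_1F(\mathbf W,x_1),\dots,\mathrm D_1F(\mathbf W,x_T)]\in\mathbb{R}^{N\times Tn_L}$, where $\mathrm D_1F(\mathbf W,x_i)\in\mathbb{R}^{N\times n_L}$ is the (transposed) Jacobian of $\mathbf W\mapsto F(\mathbf W,x_i)$, i.e. its columns are the gradients with respect to all $N$ weight entries of the $n_L$ output components. Suppose $\operatorname{rank}\mathbf P(\mathbf W)=Tn_L$ for all $\mathbf W\in\boldsymbol{\mathcal W}$. Then: (1) if exact learning is achievable, i.e. there is $\mathbf W^*\in\boldsymbol{\mathcal W}$ with $F(\mathbf W^*,x_i)=f^*(x_i)$ for all $i=1,\dots,T$, then $\mathbf W^*$ is a global minimum of $\mathcal J$ and all critical points of $\mathcal J$ are global minima; (2) if exact learning is unachievable (no such $\mathbf W^*$ exists), then $\mathcal J$ has no critical point; in particular $\mathcal J$ is non-coercive.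
   Context: A critical point of $\mathcal J$ is a $\mathbf W$ with $\nabla\mathcal J(\mathbf W)=0$; by the chain rule $\nabla\mathcal J(\mathbf W)$ is proportional to $\mathbf P(\mathbf W)\boldsymbol\varepsilon(\mathbf W)$ with $\boldsymbol\varepsilon(\mathbf W)=[\nabla_E(F(\mathbf W,x_1))^\top,\dots,\nabla_E(F(\mathbf W,x_T))^\top]^\top\in\mathbb{R}^{Tn_L}$, where $\nabla_E(F(\mathbf W,x_i))$ is the gradient of $E(\cdot,y_i)$ at $F(\mathbf W,x_i)$. *)

theory Defs
  imports Complex_Main "Jordan_Normal_Form.DL_Rank"
begin

text \<open>Vectors of R^m are represented as functions nat => real vanishing outside {..<m}.\<close>

definition vsp :: "nat \<Rightarrow> (nat \<Rightarrow> real) set" where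
  "vsp m = {v. \<forall>i\<ge>m. v i = 0}"

definition enorm :: "nat \<Rightarrow> (nat \<Rightarrow> real) \<Rightarrow> real" where
  "enorm m h = sqrt (\<Sum>i<m. (h i)\<^sup>2)"

definition has_grad :: "nat \<Rightarrow> ((nat \<Rightarrow> real) \<Rightarrow> real) \<Rightarrow> (nat \<Rightarrow> real) \<Rightarrow> (nat \<Rightarrow> real) \<Rightarrow> bool" where
  "has_grad m g phi G \<longleftrightarrow> G \<in> vsp m \<and>
     (\<forall>e>0. \<exists>d>0. \<forall>h\<in>vsp m. 0 < enorm m h \<and> enorm m h < d \<longrightarrow>
        \<bar>g (\<lambda>i. phi i + h i) - g phi - (\<Sum>i<m. G i * h i)\<bar> \<le> e * enorm m h)"

definition grad :: "nat \<Rightarrow> ((nat \<Rightarrow> real) \<Rightarrow> real) \<Rightarrow> (nat \<Rightarrow> real) \<Rightarrow> (nat \<Rightarrow> real)" where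
  "grad m g phi = (THE G. has_grad m g phi G)"

definition differentiable_on_Rm :: "nat \<Rightarrow> ((nat \<Rightarrow> real) \<Rightarrow> real) \<Rightarrow> bool" where
  "differentiable_on_Rm m g \<longleftrightarrow> (\<forall>phi\<in>vsp m. \<exists>G. has_grad m g phi G)"

definition smooth_real :: "(real \<Rightarrow> real) \<Rightarrow> bool" where
  "smooth_real f \<longleftrightarrow> (\<exists>D. D 0 = f \<and> (\<forall>k x. (D k has_real_derivative D (Suc k) x) (at x)))"

definition lipschitz_real :: "(real \<Rightarrow> real) \<Rightarrow> bool" where
  "lipschitz_real f \<longleftrightarrow> (\<exists>C. \<forall>a b. \<bar>f a - f b\<bar> \<le> C * \<bar>a - b\<bar>)"

text \<open>Weight space: W = (W_1,...,W_L), W_l in R^(n_(l-1) x n_l), vectorised (row-major, layer by layer)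
  into R^N with N = sum_l n_(l-1) n_l.\<close>
definition wdim :: "(nat \<Rightarrow> nat) \<Rightarrow> nat \<Rightarrow> nat" where
  "wdim n L = (\<Sum>l\<in>{1..L}. n (l - 1) * n l)"

definition widx :: "(nat \<Rightarrow> nat) \<Rightarrow> nat \<Rightarrow> nat \<Rightarrow> nat \<Rightarrow> nat" where
  "widx n l i j = (\<Sum>m\<in>{1..<l}. n (m - 1) * n m) + i * n l + j"

definition layer :: "(nat \<Rightarrow> nat) \<Rightarrow> (real \<Rightarrow> real) \<Rightarrow> (nat \<Rightarrow> real) \<Rightarrow> nat
                     \<Rightarrow> (nat \<Rightarrow> real) \<Rightarrow> (nat \<Rightarrow> real) \<Rightarrow> (nat \<Rightarrow> real)" where
  "layer n s bl l w v = (\<lambda>j. if j < n l then s ((\<Sum>i<n (l - 1). w (widx n l i j) * v i) + bl j) else 0)"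

fun net :: "(nat \<Rightarrow> nat) \<Rightarrow> (nat \<Rightarrow> real \<Rightarrow> real) \<Rightarrow> (nat \<Rightarrow> nat \<Rightarrow> real) \<Rightarrow> nat
            \<Rightarrow> (nat \<Rightarrow> real) \<Rightarrow> (nat \<Rightarrow> real) \<Rightarrow> (nat \<Rightarrow> real)" where
  "net n s b 0 w x = x"
| "net n s b (Suc l) w x = layer n (s (Suc l)) (b (Suc l)) (Suc l) w (net n s b l w x)"

definition emp_loss :: "(nat \<Rightarrow> nat) \<Rightarrow> nat \<Rightarrow> (nat \<Rightarrow> real \<Rightarrow> real) \<Rightarrow> (nat \<Rightarrow> nat \<Rightarrow> real)
    \<Rightarrow> ((nat \<Rightarrow> real) \<Rightarrow> (nat \<Rightarrow> real) \<Rightarrow> real) \<Rightarrow> ((nat \<Rightarrow> real) \<Rightarrow> (nat \<Rightarrow> real))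
    \<Rightarrow> nat \<Rightarrow> (nat \<Rightarrow> (nat \<Rightarrow> real)) \<Rightarrow> (nat \<Rightarrow> real) \<Rightarrow> real" where
  "emp_loss n L s b E fstar T xs w = (1 / real T) * (\<Sum>t<T. E (net n s b L w (xs t)) (fstar (xs t)))"

text \<open>P(W) = [D_1F(W,x_1), ..., D_1F(W,x_T)] in R^(N x T n_L); column t*n_L + k is the gradient
  (w.r.t. all N weight entries) of the k-th output component at input x_t.\<close>
definition Pmat :: "(nat \<Rightarrow> nat) \<Rightarrow> nat \<Rightarrow> (nat \<Rightarrow> real \<Rightarrow> real) \<Rightarrow> (nat \<Rightarrow> nat \<Rightarrow> real)
    \<Rightarrow> nat \<Rightarrow> (nat \<Rightarrow> (nat \<Rightarrow> real)) \<Rightarrow> (nat \<Rightarrow> real) \<Rightarrow> real mat" where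
  "Pmat n L s b T xs w = mat (wdim n L) (T * n L)
     (\<lambda>(r, c). grad (wdim n L) (\<lambda>w'. net n s b L w' (xs (c div n L)) (c mod n L)) w r)"

definition global_min :: "nat \<Rightarrow> ((nat \<Rightarrow> real) \<Rightarrow> real) \<Rightarrow> (nat \<Rightarrow> real) \<Rightarrow> bool" where
  "global_min m g w \<longleftrightarrow> w \<in> vsp m \<and> (\<forall>w'\<in>vsp m. g w \<le> g w')"

definition critical_point :: "nat \<Rightarrow> ((nat \<Rightarrow> real) \<Rightarrow> real) \<Rightarrow> (nat \<Rightarrow> real) \<Rightarrow> bool" where
  "critical_point m g w \<longleftrightarrow> w \<in> vsp m \<and> has_grad m g w (\<lambda>_. 0)"

definition coercive :: "nat \<Rightarrow> ((nat \<Rightarrow> real) \<Rightarrow> real) \<Rightarrow> bool" where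
  "coercive m g \<longleftrightarrow> (\<forall>M. \<exists>R. \<forall>w\<in>vsp m. enorm m w > R \<longrightarrow> g w > M)"

end

(*
  The gradient of the empirical loss is (1/T) P(W) \<epsilon>(W), where \<epsilon>(W) stacks the output
  gradients of E at F(W, x_t). Since P(W) has full column rank, a critical point has \<epsilon>(W) = 0,
  so by the hypothesis on E every output F(W, x_t) equals its target: critical points learn
  exactly, and exact learners are global minima because every summand of the loss is then
  minimal. Without an exact learner there is hence no critical point; but a coercive continuous
  loss attains its minimum on a large coordinate box, and that minimum would be critical.

  Weight vectors (nat => real, zero beyond the dimension) are embedded into the Banach space
  nat =>\<^sub>C real of bounded sequences, so that the library's Frechet calculus applies.
*)

theory Submission
  imports Defs "HOL-Analysis.Analysis"
begin

section \<open>Finite coordinates in the space of bounded sequences\<close>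

definition bcf_unit :: "nat \<Rightarrow> nat \<Rightarrow>\<^sub>C real" where
  "bcf_unit r = Bcontfun (\<lambda>i. if i = r then 1 else 0)"

lemma apply_bcf_unit [simp]: "apply_bcontfun (bcf_unit r) i = (if i = r then 1 else 0)"
proof -
  have "(\<lambda>i::nat. if i = r then 1 else (0::real)) \<in> bcontfun"
    by (rule bcontfun_normI[where b = 1]) auto
  then show ?thesis
    unfolding bcf_unit_def by (simp add: Bcontfun_inverse)
qed

lemma apply_bcontfun_sum: "apply_bcontfun (sum f A) i = (\<Sum>a\<in>A. apply_bcontfun (f a) i)"
  by (induction A rule: infinite_finite_induct) auto

lemma abs_apply_bcontfun_le_norm: "\<bar>apply_bcontfun u i\<bar> \<le> norm (u :: nat \<Rightarrow>\<^sub>C real)"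
  using norm_bounded[of u i] by simp

lemma bounded_linear_apply_bcontfun: "bounded_linear (\<lambda>u::nat \<Rightarrow>\<^sub>C real. apply_bcontfun u i)"
  by (rule bounded_linear_intro[where K = 1]) (simp_all add: abs_apply_bcontfun_le_norm)

definition bcf_of :: "nat \<Rightarrow> (nat \<Rightarrow> real) \<Rightarrow> nat \<Rightarrow>\<^sub>C real" where
  "bcf_of m h = (\<Sum>r<m. h r *\<^sub>R bcf_unit r)"

lemma apply_bcf_of: "apply_bcontfun (bcf_of m h) i = (if i < m then h i else 0)"
  by (simp add: bcf_of_def apply_bcontfun_sum if_distrib[of "(*) _"] cong: if_cong)

lemma apply_bcf_of_vsp [simp]: "h \<in> vsp m \<Longrightarrow> apply_bcontfun (bcf_of m h) = h"
  by (auto simp: apply_bcf_of vsp_def)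

lemma linear_bcf_of: "linear D \<Longrightarrow> D (bcf_of m h) = (\<Sum>r<m. h r * D (bcf_unit r))"
  by (simp add: bcf_of_def linear_sum linear_scale)

lemma enorm_nonneg: "0 \<le> enorm m h"
  unfolding enorm_def by (auto intro: sum_nonneg)

lemma abs_le_enorm: "i < m \<Longrightarrow> \<bar>h i\<bar> \<le> enorm m h"
  using real_sqrt_le_mono[OF member_le_sum[of i "{..<m}" "\<lambda>j. (h j)\<^sup>2"]]
  by (simp add: enorm_def)

lemma vsp_eqI: "f \<in> vsp m \<Longrightarrow> g \<in> vsp m \<Longrightarrow> (\<And>i. i < m \<Longrightarrow> f i = g i) \<Longrightarrow> f = g"
  by (auto simp: vsp_def fun_eq_iff) (metis not_le)

lemma enorm_eq_0_vsp: "h \<in> vsp m \<Longrightarrow> enorm m h = 0 \<Longrightarrow> h = (\<lambda>_. 0)"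
  using abs_le_enorm[of _ m h] by (intro vsp_eqI) (auto simp: vsp_def)

lemma norm_bcf_of_le_enorm: "norm (bcf_of m h) \<le> enorm m h"
  by (rule norm_bound) (auto simp: apply_bcf_of abs_le_enorm enorm_nonneg)

lemma enorm_le_sqrt_mult:
  assumes "B \<ge> 0" and "\<And>i. i < m \<Longrightarrow> \<bar>h i\<bar> \<le> B"
  shows "enorm m h \<le> sqrt (real m) * B"
proof -
  have "(\<Sum>i<m. (h i)\<^sup>2) \<le> (\<Sum>i<m. B\<^sup>2)"
    using assms power_mono[of "\<bar>h _\<bar>" B 2] by (intro sum_mono) simp
  then have "enorm m h \<le> sqrt (real m * B\<^sup>2)"
    unfolding enorm_def by (intro real_sqrt_le_mono) simp
  then show ?thesis
    using assms(1) by (simp add: real_sqrt_mult)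
qed

definition coords :: "nat \<Rightarrow> (nat \<Rightarrow>\<^sub>C real) \<Rightarrow> nat \<Rightarrow> real" where
  "coords m u i = (if i < m then apply_bcontfun u i else 0)"

lemma coords_vsp: "coords m u \<in> vsp m"
  by (simp add: coords_def vsp_def)

lemma coords_bcf_of [simp]: "h \<in> vsp m \<Longrightarrow> coords m (bcf_of m h) = h"
  by (auto simp: coords_def apply_bcf_of vsp_def)

lemma enorm_coords_le: "enorm m (coords m u) \<le> sqrt (real m) * norm u"
  using abs_apply_bcontfun_le_norm[of u] by (intro enorm_le_sqrt_mult) (auto simp: coords_def)

section \<open>Gradients as Frechet derivatives\<close>

lemma has_derivative_imp_has_grad:
  assumes der: "((\<lambda>u. g (apply_bcontfun u)) has_derivative D) (at (bcf_of m w))"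
    and w: "w \<in> vsp m"
  shows "has_grad m g w (\<lambda>r. if r < m then D (bcf_unit r) else 0)"
  unfolding has_grad_def
proof (intro conjI allI impI)
  show "(\<lambda>r. if r < m then D (bcf_unit r) else 0) \<in> vsp m"
    by (simp add: vsp_def)
  fix e :: real
  assume "e > 0"
  with der obtain d where "d > 0" and lin: "linear D"
    and approx: "\<And>y. norm (y - bcf_of m w) < d \<Longrightarrow>
      \<bar>g (apply_bcontfun y) - g w - D (y - bcf_of m w)\<bar> \<le> e * norm (y - bcf_of m w)"
    using w unfolding has_derivative_at_alt by (force dest: bounded_linear.linear)
  have "\<bar>g (\<lambda>i. w i + h i) - g w - (\<Sum>i<m. (if i < m then D (bcf_unit i) else 0) * h i)\<bar>
          \<le> e * enorm m h" if h: "h \<in> vsp m" "enorm m h < d" for h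
  proof -
    have shift: "bcf_of m w + bcf_of m h - bcf_of m w = bcf_of m h"
      by simp
    have "apply_bcontfun (bcf_of m w + bcf_of m h) = (\<lambda>i. w i + h i)"
      using w h by auto
    moreover have "D (bcf_of m h) = (\<Sum>i<m. (if i < m then D (bcf_unit i) else 0) * h i)"
      using linear_bcf_of[OF lin] by (simp add: mult.commute)
    ultimately have "\<bar>g (\<lambda>i. w i + h i) - g w - (\<Sum>i<m. (if i < m then D (bcf_unit i) else 0) * h i)\<bar>
          \<le> e * norm (bcf_of m h)"
      using approx[of "bcf_of m w + bcf_of m h"] norm_bcf_of_le_enorm[of m h] h by (simp add: shift)
    also have "\<dots> \<le> e * enorm m h"
      using norm_bcf_of_le_enorm \<open>e > 0\<close> by simp
    finally show ?thesis .
  qed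
  with \<open>d > 0\<close> show "\<exists>d>0. \<forall>h\<in>vsp m. 0 < enorm m h \<and> enorm m h < d \<longrightarrow>
      \<bar>g (\<lambda>i. w i + h i) - g w - (\<Sum>i<m. (if i < m then D (bcf_unit i) else 0) * h i)\<bar> \<le> e * enorm m h"
    by blast
qed

lemma has_grad_imp_has_derivative:
  assumes hg: "has_grad m g phi G" and phi: "phi \<in> vsp m"
  shows "((\<lambda>u. g (coords m u)) has_derivative (\<lambda>u. \<Sum>k<m. G k * apply_bcontfun u k)) (at (bcf_of m phi))"
  unfolding has_derivative_at_alt
proof (intro conjI allI impI)
  show "bounded_linear (\<lambda>u. \<Sum>k<m. G k * apply_bcontfun u k)"
    by (intro bounded_linear_sum bounded_linear_compose[OF bounded_linear_mult_right]
        bounded_linear_apply_bcontfun)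
  fix e :: real
  assume "e > 0"
  define c where "c = sqrt (real m) + 1"
  have "c > 0"
    by (simp add: c_def add_nonneg_pos)
  with \<open>e > 0\<close> have "e / c > 0"
    by simp
  with hg obtain d where "d > 0"
    and approx: "\<forall>h\<in>vsp m. 0 < enorm m h \<and> enorm m h < d \<longrightarrow>
        \<bar>g (\<lambda>i. phi i + h i) - g phi - (\<Sum>i<m. G i * h i)\<bar> \<le> e / c * enorm m h"
    unfolding has_grad_def by blast
  have "\<bar>g (coords m y) - g (coords m (bcf_of m phi)) - (\<Sum>k<m. G k * apply_bcontfun (y - bcf_of m phi) k)\<bar>
          \<le> e * norm (y - bcf_of m phi)" if y: "norm (y - bcf_of m phi) < d / c" for y
  proof -
    define h where "h = coords m (y - bcf_of m phi)"
    have h_bound: "enorm m h \<le> c * norm (y - bcf_of m phi)"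
      using enorm_coords_le[of m "y - bcf_of m phi"]
        mult_right_mono[of "sqrt (real m)" c "norm (y - bcf_of m phi)"]
      unfolding h_def c_def by simp
    have coords_y: "coords m y = (\<lambda>i. phi i + h i)"
      using phi by (auto simp: h_def coords_def apply_bcf_of vsp_def)
    have lin: "(\<Sum>k<m. G k * apply_bcontfun (y - bcf_of m phi) k) = (\<Sum>i<m. G i * h i)"
      by (simp add: h_def coords_def)
    show ?thesis
    proof (cases "enorm m h = 0")
      case True
      then have "h = (\<lambda>_. 0)"
        by (intro enorm_eq_0_vsp) (simp_all add: h_def coords_vsp)
      then show ?thesis
        using phi lin \<open>e > 0\<close> by (simp add: coords_y)
    next
      case False
      have "enorm m h < d"
        using h_bound y \<open>c > 0\<close> by (simp add: pos_less_divide_eq mult.commute)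
      then have "\<bar>g (\<lambda>i. phi i + h i) - g phi - (\<Sum>i<m. G i * h i)\<bar> \<le> e / c * enorm m h"
        using approx False enorm_nonneg[of m h] by (simp add: h_def coords_vsp)
      also have "\<dots> \<le> e / c * (c * norm (y - bcf_of m phi))"
        using h_bound \<open>e > 0\<close> \<open>c > 0\<close> by (intro mult_left_mono) auto
      also have "\<dots> = e * norm (y - bcf_of m phi)"
        using \<open>c > 0\<close> by simp
      finally show ?thesis
        using phi by (simp only: coords_y lin coords_bcf_of)
    qed
  qed
  with \<open>d > 0\<close> \<open>c > 0\<close> show "\<exists>d>0. \<forall>y. norm (y - bcf_of m phi) < d \<longrightarrow>
      norm (g (coords m y) - g (coords m (bcf_of m phi)) - (\<Sum>k<m. G k * apply_bcontfun (y - bcf_of m phi) k))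
        \<le> e * norm (y - bcf_of m phi)"
    by (intro exI[of _ "d / c"]) auto
qed

lemma has_grad_unique:
  assumes "has_grad m g phi G1" "has_grad m g phi G2" "phi \<in> vsp m"
  shows "G1 = G2"
proof -
  have derivs_eq: "(\<lambda>u. \<Sum>k<m. G1 k * apply_bcontfun u k) = (\<lambda>u. \<Sum>k<m. G2 k * apply_bcontfun u k)"
    using assms by (intro has_derivative_unique[OF has_grad_imp_has_derivative has_grad_imp_has_derivative])
  have "G1 r = G2 r" if "r < m" for r
    using that fun_cong[OF derivs_eq, of "bcf_unit r"] by (simp add: if_distrib cong: if_cong)
  moreover have "G1 \<in> vsp m" "G2 \<in> vsp m"
    using assms by (auto simp: has_grad_def)
  ultimately show ?thesis
    by (intro vsp_eqI)
qed

lemma grad_eqI: "has_grad m g phi G \<Longrightarrow> phi \<in> vsp m \<Longrightarrow> grad m g phi = G"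
  unfolding grad_def by (blast intro: the_equality has_grad_unique)

lemma has_derivative_comp_has_grad:
  fixes F :: "(nat \<Rightarrow>\<^sub>C real) \<Rightarrow> nat \<Rightarrow> real"
  assumes F_vsp: "\<And>u. F u \<in> vsp K"
    and F_deriv: "\<And>k. k < K \<Longrightarrow> ((\<lambda>u. F u k) has_derivative DF k) (at u0)"
    and g_grad: "has_grad K g (F u0) G"
  shows "((\<lambda>u. g (F u)) has_derivative (\<lambda>v. \<Sum>k<K. G k * DF k v)) (at u0)"
proof -
  have "((\<lambda>u. bcf_of K (F u)) has_derivative (\<lambda>v. bcf_of K (\<lambda>k. DF k v))) (at u0)"
    unfolding bcf_of_def using F_deriv by (intro has_derivative_sum has_derivative_scaleR_left) auto
  from has_derivative_compose[OF this has_grad_imp_has_derivative[OF g_grad F_vsp]]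
  have "((\<lambda>u. g (F u)) has_derivative
          (\<lambda>v. \<Sum>k<K. G k * apply_bcontfun (bcf_of K (\<lambda>k. DF k v)) k)) (at u0)"
    using F_vsp by simp
  then show ?thesis
    by (simp add: apply_bcf_of)
qed

section \<open>Minima and coercivity\<close>

lemma global_min_imp_critical_point:
  assumes diff: "(\<lambda>u. g (apply_bcontfun u)) differentiable (at (bcf_of m w))"
    and min: "global_min m g w"
  shows "critical_point m g w"
proof -
  have w: "w \<in> vsp m"
    using min by (simp add: global_min_def)
  obtain D where D: "((\<lambda>u. g (apply_bcontfun u)) has_derivative D) (at (bcf_of m w))"
    using diff by (auto simp: differentiable_def)
  have proj_eq: "bcf_of m (coords m u) = (\<Sum>r<m. apply_bcontfun u r *\<^sub>R bcf_unit r)" for u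
    by (simp add: bcf_of_def coords_def)
  have proj: "((\<lambda>u. bcf_of m (coords m u)) has_derivative (\<lambda>u. bcf_of m (coords m u))) (at (bcf_of m w))"
    unfolding proj_eq
    by (intro has_derivative_sum has_derivative_scaleR_left
        bounded_linear_imp_has_derivative[OF bounded_linear_apply_bcontfun])
  have "((\<lambda>u. g (apply_bcontfun u)) has_derivative D) (at (bcf_of m (coords m (bcf_of m w))))"
    using D w by simp
  from has_derivative_compose[OF proj this]
  have "((\<lambda>u. g (coords m u)) has_derivative (\<lambda>u. D (bcf_of m (coords m u)))) (at (bcf_of m w))"
    by (simp add: coords_vsp)
  moreover have "g (coords m (bcf_of m w)) \<le> g (coords m u)" for u
    using min w coords_vsp by (simp add: global_min_def)
  ultimately have "(\<lambda>u. D (bcf_of m (coords m u))) = (\<lambda>_. 0)"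
    by (intro has_derivative_local_min) auto
  moreover have "bcf_of m (coords m (bcf_unit r)) = bcf_unit r" if "r < m" for r
    using that by (intro bcontfun_eqI) (simp add: apply_bcf_of coords_def)
  ultimately have "D (bcf_unit r) = 0" if "r < m" for r
    using that by metis
  then have "(\<lambda>r. if r < m then D (bcf_unit r) else 0) = (\<lambda>_. 0)"
    by auto
  with has_derivative_imp_has_grad[OF D w] w show ?thesis
    by (simp add: critical_point_def)
qed

definition coord_box :: "nat \<Rightarrow> real \<Rightarrow> (nat \<Rightarrow>\<^sub>C real) set" where
  "coord_box m R = {u. \<forall>i. (i < m \<longrightarrow> \<bar>apply_bcontfun u i\<bar> \<le> R) \<and> (m \<le> i \<longrightarrow> apply_bcontfun u i = 0)}"

lemma compact_coord_box: "compact (coord_box m R)"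
proof (induction m)
  case 0
  have "coord_box 0 R = {0}"
    by (auto simp: coord_box_def intro!: bcontfun_eqI)
  then show ?case
    by simp
next
  case (Suc m)
  have "coord_box (Suc m) R = (\<lambda>(u, c). u + c *\<^sub>R bcf_unit m) ` (coord_box m R \<times> {-R..R})"
  proof (intro equalityI subsetI)
    fix u
    assume u: "u \<in> coord_box (Suc m) R"
    let ?c = "apply_bcontfun u m"
    have "u - ?c *\<^sub>R bcf_unit m \<in> coord_box m R" "?c \<in> {-R..R}"
      using u by (auto simp: coord_box_def)
    then show "u \<in> (\<lambda>(u, c). u + c *\<^sub>R bcf_unit m) ` (coord_box m R \<times> {-R..R})"
      by (intro image_eqI[of _ _ "(u - ?c *\<^sub>R bcf_unit m, ?c)"]) auto
  qed (auto simp: coord_box_def)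
  moreover have "compact ((\<lambda>(u, c). u + c *\<^sub>R bcf_unit m) ` (coord_box m R \<times> {-R..R}))"
    unfolding case_prod_beta
    by (intro compact_continuous_image compact_Times Suc compact_Icc continuous_intros)
  ultimately show ?case
    by simp
qed

lemma coercive_imp_global_min:
  assumes cont: "continuous_on UNIV (\<lambda>u. g (apply_bcontfun u))" and "coercive m g"
  shows "\<exists>w. global_min m g w"
proof -
  obtain R where R: "\<And>w. w \<in> vsp m \<Longrightarrow> enorm m w > R \<Longrightarrow> g w > g (\<lambda>_. 0)"
    using \<open>coercive m g\<close> unfolding coercive_def by blast
  have apply_bcontfun_0: "apply_bcontfun 0 = (\<lambda>_. 0)"
    by (simp add: fun_eq_iff)
  define B where "B = coord_box m (max R 0)"
  have "0 \<in> B"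
    by (simp add: B_def coord_box_def)
  then obtain u where "u \<in> B" and u_min: "\<And>v. v \<in> B \<Longrightarrow> g (apply_bcontfun u) \<le> g (apply_bcontfun v)"
    using continuous_attains_inf[OF compact_coord_box _ continuous_on_subset[OF cont]]
    unfolding B_def by blast
  have "g (apply_bcontfun u) \<le> g w'" if w': "w' \<in> vsp m" for w'
  proof (cases "enorm m w' > R")
    case True
    then show ?thesis
      using R[OF w'] u_min[OF \<open>0 \<in> B\<close>] by (simp add: apply_bcontfun_0)
  next
    case False
    then have "bcf_of m w' \<in> B"
      using abs_le_enorm[of _ m w'] by (fastforce simp: B_def coord_box_def apply_bcf_of)
    then show ?thesis
      using u_min w' by fastforce
  qed
  moreover have "apply_bcontfun u \<in> vsp m"
    using \<open>u \<in> B\<close> by (simp add: B_def coord_box_def vsp_def)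
  ultimately show ?thesis
    unfolding global_min_def by blast
qed

section \<open>The empirical loss of a network\<close>

lemma full_col_rank_mult_vec_zero:
  fixes A :: "real mat"
  assumes A: "A \<in> carrier_mat nr nc" and rank: "vec_space.rank nr A = nc"
    and v: "v \<in> carrier_vec nc" and Av: "A *\<^sub>v v = 0\<^sub>v nr"
  shows "v = 0\<^sub>v nc"
proof -
  interpret vec_space "TYPE(real)" nr .
  have "distinct (cols A)"
  proof (rule ccontr)
    assume "\<not> distinct (cols A)"
    obtain S where S: "maximal S (\<lambda>T. T \<subseteq> set (cols A) \<and> lin_indpt T)"
      using maximal_exists[of "\<lambda>T. T \<subseteq> set (cols A) \<and> lin_indpt T" "card (set (cols A))" "{}"]
      by (meson List.finite_set card_mono empty_iff empty_subsetI finite_lin_indpt2 rev_finite_subset)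
    then have "card S \<le> card (set (cols A))"
      by (simp add: card_mono maximal_def)
    also have "\<dots> < length (cols A)"
      using card_length[of "cols A"] card_distinct \<open>\<not> distinct (cols A)\<close> by (metis nat_less_le)
    also have "\<dots> = nc"
      using A by simp
    finally show False
      using rank_card_indpt[OF A S] rank by simp
  qed
  then show ?thesis
    using lin_depI[OF A v _ Av] full_rank_lin_indpt[OF A rank] by blast
qed

lemma sum_lessThan_mult_div_mod:
  "(\<Sum>c<T * K. f (c div K) (c mod K)) = (\<Sum>t<T. \<Sum>k<K. f t k)" for K :: nat
proof -
  have "(\<Sum>c\<in>{t * K..<t * K + K}. f (c div K) (c mod K)) = (\<Sum>k<K. f t k)" for t
    by (subst sum.atLeastLessThan_shift_0) (auto simp: lessThan_atLeast0 intro!: sum.cong)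
  then show ?thesis
    by (simp flip: sum.nat_group)
qed

lemma smooth_real_imp_differentiable: "smooth_real f \<Longrightarrow> f differentiable (at x)"
  unfolding smooth_real_def has_field_derivative_def differentiable_def by metis

lemma net_differentiable:
  assumes "\<And>l' y. 1 \<le> l' \<Longrightarrow> l' \<le> l \<Longrightarrow> s l' differentiable (at y)"
  shows "(\<lambda>u. net n s b l (apply_bcontfun u) x j) differentiable (at u0)"
  using assms
proof (induction l arbitrary: j)
  case 0
  show ?case
    by simp
next
  case (Suc l)
  define pre where "pre u = (\<Sum>i<n l. apply_bcontfun u (widx n (Suc l) i j) * net n s b l (apply_bcontfun u) x i)
    + b (Suc l) j" for u
  have "pre differentiable (at u0)"
    unfolding pre_def using Suc
    by (intro differentiable_add differentiable_sum ballI differentiable_mult differentiable_const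
        bounded_linear_imp_differentiable[OF bounded_linear_apply_bcontfun]) auto
  moreover have "s (Suc l) differentiable (at (pre u0))"
    using Suc.prems by simp
  ultimately have "(\<lambda>u. s (Suc l) (pre u)) differentiable (at u0)"
    by (rule differentiable_chain_at[unfolded o_def])
  then show ?case
    by (cases "j < n (Suc l)") (simp_all add: layer_def pre_def)
qed

locale network_regression =
  fixes n :: "nat \<Rightarrow> nat" and L T :: nat
    and s :: "nat \<Rightarrow> real \<Rightarrow> real" and b :: "nat \<Rightarrow> nat \<Rightarrow> real"
    and fstar :: "(nat \<Rightarrow> real) \<Rightarrow> nat \<Rightarrow> real" and xs :: "nat \<Rightarrow> nat \<Rightarrow> real"
    and E :: "(nat \<Rightarrow> real) \<Rightarrow> (nat \<Rightarrow> real) \<Rightarrow> real"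
  assumes L_pos: "L \<ge> 1"
    and act_differentiable: "\<And>l x. 1 \<le> l \<Longrightarrow> l \<le> L \<Longrightarrow> s l differentiable (at x)"
    and target_vsp: "\<And>t. t < T \<Longrightarrow> fstar (xs t) \<in> vsp (n L)"
    and E_diff: "\<And>y. y \<in> vsp (n L) \<Longrightarrow> differentiable_on_Rm (n L) (\<lambda>phi. E phi y)"
    and E_min: "\<And>y phi. y \<in> vsp (n L) \<Longrightarrow> phi \<in> vsp (n L) \<Longrightarrow> E y y \<le> E phi y"
    and E_crit: "\<And>y phi. y \<in> vsp (n L) \<Longrightarrow> phi \<in> vsp (n L) \<Longrightarrow>
                   grad (n L) (\<lambda>psi. E psi y) phi = (\<lambda>_. 0) \<longleftrightarrow> phi = y"
    and rank_P: "\<And>w. w \<in> vsp (wdim n L) \<Longrightarrow>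
                   vec_space.rank (wdim n L) (Pmat n L s b T xs w) = T * n L"
begin

abbreviation N :: nat where
  "N \<equiv> wdim n L"

abbreviation J :: "(nat \<Rightarrow> real) \<Rightarrow> real" where
  "J \<equiv> emp_loss n L s b E fstar T xs"

definition out_grad :: "(nat \<Rightarrow> real) \<Rightarrow> nat \<Rightarrow> nat \<Rightarrow> real" where
  "out_grad w t = grad (n L) (\<lambda>phi. E phi (fstar (xs t))) (net n s b L w (xs t))"

definition err_vec :: "(nat \<Rightarrow> real) \<Rightarrow> real Matrix.vec" where
  "err_vec w = Matrix.vec (T * n L) (\<lambda>c. out_grad w (c div n L) (c mod n L))"

definition net_deriv :: "nat \<Rightarrow> nat \<Rightarrow> (nat \<Rightarrow>\<^sub>C real) \<Rightarrow> (nat \<Rightarrow>\<^sub>C real) \<Rightarrow> real" where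
  "net_deriv t k u0 = frechet_derivative (\<lambda>u. net n s b L (apply_bcontfun u) (xs t) k) (at u0)"

lemma net_vsp: "net n s b L w x \<in> vsp (n L)"
proof -
  obtain l where "L = Suc l"
    using L_pos by (cases L) auto
  then show ?thesis
    by (simp add: layer_def vsp_def)
qed

lemma net_has_derivative:
  "((\<lambda>u. net n s b L (apply_bcontfun u) (xs t) k) has_derivative net_deriv t k u0) (at u0)"
  unfolding net_deriv_def frechet_derivative_works[symmetric]
  by (rule net_differentiable) (rule act_differentiable)

lemma out_grad_has_grad:
  assumes "t < T"
  shows "has_grad (n L) (\<lambda>phi. E phi (fstar (xs t))) (net n s b L w (xs t)) (out_grad w t)"
proof -
  obtain G where G: "has_grad (n L) (\<lambda>phi. E phi (fstar (xs t))) (net n s b L w (xs t)) G"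
    using E_diff[OF target_vsp[OF assms]] net_vsp unfolding differentiable_on_Rm_def by blast
  then show ?thesis
    unfolding out_grad_def using grad_eqI[OF G net_vsp] by simp
qed

lemma loss_has_derivative:
  "((\<lambda>u. J (apply_bcontfun u)) has_derivative
     (\<lambda>v. (\<Sum>t<T. \<Sum>k<n L. out_grad (apply_bcontfun u0) t k * net_deriv t k u0 v) / T)) (at u0)"
proof -
  have "((\<lambda>u. E (net n s b L (apply_bcontfun u) (xs t)) (fstar (xs t))) has_derivative
          (\<lambda>v. \<Sum>k<n L. out_grad (apply_bcontfun u0) t k * net_deriv t k u0 v)) (at u0)"
    if "t < T" for t
    using net_vsp net_has_derivative out_grad_has_grad[OF that]
    by (rule has_derivative_comp_has_grad)
  then have "((\<lambda>u. 1 / T * (\<Sum>t<T. E (net n s b L (apply_bcontfun u) (xs t)) (fstar (xs t)))) has_derivative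
      (\<lambda>v. 1 / T * (\<Sum>t<T. \<Sum>k<n L. out_grad (apply_bcontfun u0) t k * net_deriv t k u0 v))) (at u0)"
    by (intro has_derivative_mult_right has_derivative_sum) auto
  then show ?thesis
    by (simp add: emp_loss_def)
qed

lemma loss_continuous: "continuous_on UNIV (\<lambda>u. J (apply_bcontfun u))"
  using loss_has_derivative by (blast intro: has_derivative_continuous continuous_at_imp_continuous_on)

lemma Pmat_entry:
  assumes "w \<in> vsp N" "r < N" "c < T * n L"
  shows "Pmat n L s b T xs w $$ (r, c) = net_deriv (c div n L) (c mod n L) (bcf_of N w) (bcf_unit r)"
  using assms grad_eqI[OF has_derivative_imp_has_grad[OF net_has_derivative]]
  by (simp add: Pmat_def)

lemma has_grad_loss:
  assumes w: "w \<in> vsp N"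
  shows "has_grad N J w (\<lambda>r. if r < N then (Pmat n L s b T xs w *\<^sub>v err_vec w) $ r / T else 0)"
proof -
  have "(Pmat n L s b T xs w *\<^sub>v err_vec w) $ r
      = (\<Sum>t<T. \<Sum>k<n L. out_grad w t k * net_deriv t k (bcf_of N w) (bcf_unit r))" if "r < N" for r
  proof -
    have "(Pmat n L s b T xs w *\<^sub>v err_vec w) $ r
        = (\<Sum>c\<in>{0..<T * n L}. Pmat n L s b T xs w $$ (r, c) * err_vec w $ c)"
      using that by (simp add: Pmat_def[of n L s b T xs w] scalar_prod_def err_vec_def)
    also have "\<dots> = (\<Sum>c<T * n L. out_grad w (c div n L) (c mod n L)
                         * net_deriv (c div n L) (c mod n L) (bcf_of N w) (bcf_unit r))"
      using that w by (auto simp: Pmat_entry err_vec_def atLeast0LessThan intro!: sum.cong)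
    finally show ?thesis
      using sum_lessThan_mult_div_mod[of "\<lambda>t k. out_grad w t k * net_deriv t k (bcf_of N w) (bcf_unit r)"]
      by simp
  qed
  with has_derivative_imp_has_grad[OF loss_has_derivative w] w show ?thesis
    by (simp cong: if_cong)
qed

lemma critical_point_imp_err_vec_zero:
  assumes "critical_point N J w" and "T > 0"
  shows "err_vec w = 0\<^sub>v (T * n L)"
proof -
  have w: "w \<in> vsp N" and "has_grad N J w (\<lambda>_. 0)"
    using assms(1) by (auto simp: critical_point_def)
  then have "(\<lambda>r. if r < N then (Pmat n L s b T xs w *\<^sub>v err_vec w) $ r / T else 0) = (\<lambda>_. 0)"
    using has_grad_unique has_grad_loss by blast
  then have "Pmat n L s b T xs w *\<^sub>v err_vec w = 0\<^sub>v N"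
    using \<open>T > 0\<close> by (intro eq_vecI) (auto simp: Pmat_def fun_eq_iff split: if_splits)
  from full_col_rank_mult_vec_zero[OF _ rank_P[OF w] _ this] show ?thesis
    by (simp add: Pmat_def err_vec_def)
qed

lemma err_vec_zero_imp_exact:
  assumes err_0: "err_vec w = 0\<^sub>v (T * n L)" and t: "t < T"
  shows "net n s b L w (xs t) = fstar (xs t)"
proof -
  have "out_grad w t k = 0" if "k < n L" for k
  proof -
    have "t * n L + k < Suc t * n L"
      using that by simp
    also have "\<dots> \<le> T * n L"
      using t by (intro mult_le_mono1) simp
    finally have idx: "t * n L + k < T * n L" .
    then have "err_vec w $ (t * n L + k) = 0"
      using err_0 by simp
    then show ?thesis
      using idx that by (simp add: err_vec_def)
  qed
  moreover have "out_grad w t \<in> vsp (n L)"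
    using out_grad_has_grad[OF t] by (simp add: has_grad_def)
  ultimately have "out_grad w t = (\<lambda>_. 0)"
    by (intro vsp_eqI) (simp_all add: vsp_def)
  then show ?thesis
    using E_crit[OF target_vsp[OF t] net_vsp] by (simp add: out_grad_def)
qed

lemma critical_point_imp_exact:
  assumes "critical_point N J w"
  shows "w \<in> vsp N \<and> (\<forall>t<T. net n s b L w (xs t) = fstar (xs t))"
  using assms critical_point_imp_err_vec_zero err_vec_zero_imp_exact by (simp add: critical_point_def)

lemma exact_imp_global_min:
  assumes w: "w \<in> vsp N" and exact: "\<And>t. t < T \<Longrightarrow> net n s b L w (xs t) = fstar (xs t)"
  shows "global_min N J w"
proof -
  have "E (net n s b L w (xs t)) (fstar (xs t)) \<le> E (net n s b L w' (xs t)) (fstar (xs t))"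
    if "t < T" for t w'
    using E_min[OF target_vsp[OF that] net_vsp] exact[OF that] by simp
  then have "J w \<le> J w'" for w'
    unfolding emp_loss_def by (intro mult_left_mono sum_mono) auto
  with w show ?thesis
    by (simp add: global_min_def)
qed


lemma critical_point_imp_global_min: "critical_point N J w \<Longrightarrow> global_min N J w"
  using critical_point_imp_exact exact_imp_global_min by blast

lemma coercive_imp_critical_point:
  assumes "coercive N J"
  obtains w where "critical_point N J w"
  using coercive_imp_global_min[OF loss_continuous assms]
  by (blast intro: global_min_imp_critical_point differentiableI[OF loss_has_derivative])

end

theorem theorem1:
  fixes L T :: nat and n :: "nat \<Rightarrow> nat"
    and s :: "nat \<Rightarrow> real \<Rightarrow> real" and b :: "nat \<Rightarrow> nat \<Rightarrow> real"
    and fstar :: "(nat \<Rightarrow> real) \<Rightarrow> (nat \<Rightarrow> real)"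
    and xs :: "nat \<Rightarrow> (nat \<Rightarrow> real)"
    and E :: "(nat \<Rightarrow> real) \<Rightarrow> (nat \<Rightarrow> real) \<Rightarrow> real"
  assumes L_pos: "L \<ge> 1"
    and n_pos: "\<forall>l\<le>L. n l \<ge> 1"
    and act: "\<forall>l. 1 \<le> l \<and> l < L \<longrightarrow> smooth_real (s l) \<and> mono (s l) \<and> lipschitz_real (s l)"
    and act_last: "s L = (\<lambda>t. t)"
    and fstar_map: "\<forall>x\<in>vsp (n 0). fstar x \<in> vsp (n L)"
    and xs_in: "\<forall>t<T. xs t \<in> vsp (n 0)"
    and E_diff: "\<forall>y\<in>vsp (n L). differentiable_on_Rm (n L) (\<lambda>phi. E phi y)"
    and E_min: "\<forall>y\<in>vsp (n L). \<forall>phi\<in>vsp (n L). E y y \<le> E phi y"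
    and E_crit: "\<forall>y\<in>vsp (n L). \<forall>phi\<in>vsp (n L).
                   grad (n L) (\<lambda>psi. E psi y) phi = (\<lambda>_. 0) \<longleftrightarrow> phi = y"
    and rank_P: "\<forall>w\<in>vsp (wdim n L). vec_space.rank (wdim n L) (Pmat n L s b T xs w) = T * n L"
  shows
    "(\<forall>wstar\<in>vsp (wdim n L). (\<forall>t<T. net n s b L wstar (xs t) = fstar (xs t)) \<longrightarrow>
        global_min (wdim n L) (emp_loss n L s b E fstar T xs) wstar)
     \<and> ((\<exists>wstar\<in>vsp (wdim n L). \<forall>t<T. net n s b L wstar (xs t) = fstar (xs t)) \<longrightarrow>
        (\<forall>w. critical_point (wdim n L) (emp_loss n L s b E fstar T xs) w \<longrightarrow>
             global_min (wdim n L) (emp_loss n L s b E fstar T xs) w))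
     \<and> ((\<not> (\<exists>wstar\<in>vsp (wdim n L). \<forall>t<T. net n s b L wstar (xs t) = fstar (xs t))) \<longrightarrow>
        (\<forall>w. \<not> critical_point (wdim n L) (emp_loss n L s b E fstar T xs) w)
        \<and> \<not> coercive (wdim n L) (emp_loss n L s b E fstar T xs))"
proof -
  interpret network_regression n L T s b fstar xs E
  proof
    show "s l differentiable (at x)" if "1 \<le> l" "l \<le> L" for l x
      using that act act_last by (cases "l = L") (simp_all add: smooth_real_imp_differentiable)
  qed (use L_pos in \<open>simp_all add: fstar_map xs_in E_diff E_min E_crit rank_P\<close>)
  let ?N = "wdim n L" and ?J = "emp_loss n L s b E fstar T xs"
  show ?thesis
  proof (intro conjI impI allI ballI notI)
    fix w
    assume "w \<in> vsp ?N" "\<forall>t<T. net n s b L w (xs t) = fstar (xs t)"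
    then show "global_min ?N ?J w"
      by (simp add: exact_imp_global_min)
  next
    fix w
    assume "critical_point ?N ?J w"
    then show "global_min ?N ?J w"
      by (rule critical_point_imp_global_min)
  next
    fix w
    assume "\<not> (\<exists>w\<in>vsp ?N. \<forall>t<T. net n s b L w (xs t) = fstar (xs t))" "critical_point ?N ?J w"
    then show False
      using critical_point_imp_exact[of w] by auto
  next
    assume inexact: "\<not> (\<exists>w\<in>vsp ?N. \<forall>t<T. net n s b L w (xs t) = fstar (xs t))"
      and "coercive ?N ?J"
    from \<open>coercive ?N ?J\<close> obtain w where "critical_point ?N ?J w"
      by (rule coercive_imp_critical_point)
    with inexact show False
      using critical_point_imp_exact[of w] by auto
  qed
qed

end
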